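(* For every 3-periodic of the elliptic billiard, the ratio of the area $A'$ of its outer triangle to its area $A$ is $$\frac{A'}{A}=\frac{2}{JL-4}.$$
   Context: The elliptic billiard is $\mathcal{E}: x^2/a^2+y^2/b^2=1$, $a>b>0$, $c=\sqrt{a^2-b^2}$. A 3-periodic is a triangle $P_1P_2P_3$ inscribed in $\mathcal{E}$ that is a closed billiard trajectory (at each vertex the normal to $\mathcal{E}$ bisects the angle between the two incident sides). Its outer triangle has as sides the tangent lines to $\mathcal{E}$ at $P_1,P_2,P_3$. $L$ is the perimeter (the same for all 3-periodics) and $J$ is Joachimsthal's constant, $J=\frac12\nabla f(P_i)\cdot\hat v>0$ with $f=x^2/a^2+y^2/b^2$ and $\hat v$ the unit direction of the trajectory at $P_i$; explicitly with $\delta=\sqrt{a^4-a^2b^2+b^4}$, $J=\sqrt{2\delta-a^2-b^2}/c^2$ and $L=2(\delta+a^2+b^2)J$. *)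

theory Defs
  imports Complex_Main
begin

type_synonym pt = "real \<times> real"

definition cross2 :: "pt \<Rightarrow> pt \<Rightarrow> real" where
  "cross2 u v = fst u * snd v - snd u * fst v"

definition dist2 :: "pt \<Rightarrow> pt \<Rightarrow> real" where
  "dist2 P Q = sqrt ((fst P - fst Q)^2 + (snd P - snd Q)^2)"

definition on_ellipse :: "real \<Rightarrow> real \<Rightarrow> pt \<Rightarrow> bool" where
  "on_ellipse a b P \<longleftrightarrow> (fst P)^2 / a^2 + (snd P)^2 / b^2 = 1"

definition ell_normal :: "real \<Rightarrow> real \<Rightarrow> pt \<Rightarrow> pt" where
  "ell_normal a b P = (fst P / a^2, snd P / b^2)"

definition unit_dir :: "pt \<Rightarrow> pt \<Rightarrow> pt" where
  "unit_dir P Q = ((fst Q - fst P) / dist2 P Q, (snd Q - snd P) / dist2 P Q)"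

text \<open>At vertex P with neighbours U and W the normal to the ellipse bisects the angle UPW:
  the sum of the unit vectors from P towards U and towards W is parallel to the normal.\<close>
definition bounce :: "real \<Rightarrow> real \<Rightarrow> pt \<Rightarrow> pt \<Rightarrow> pt \<Rightarrow> bool" where
  "bounce a b U P W \<longleftrightarrow>
     cross2 (fst (unit_dir P U) + fst (unit_dir P W), snd (unit_dir P U) + snd (unit_dir P W))
            (ell_normal a b P) = 0"

definition three_periodic :: "real \<Rightarrow> real \<Rightarrow> pt \<Rightarrow> pt \<Rightarrow> pt \<Rightarrow> bool" where
  "three_periodic a b P1 P2 P3 \<longleftrightarrow>
     on_ellipse a b P1 \<and> on_ellipse a b P2 \<and> on_ellipse a b P3 \<and>
     cross2 (fst P2 - fst P1, snd P2 - snd P1) (fst P3 - fst P1, snd P3 - snd P1) \<noteq> 0 \<and>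
     bounce a b P3 P1 P2 \<and> bounce a b P1 P2 P3 \<and> bounce a b P2 P3 P1"

definition tri_area :: "pt \<Rightarrow> pt \<Rightarrow> pt \<Rightarrow> real" where
  "tri_area P Q R = \<bar>cross2 (fst Q - fst P, snd Q - snd P) (fst R - fst P, snd R - snd P)\<bar> / 2"

definition on_tangent :: "real \<Rightarrow> real \<Rightarrow> pt \<Rightarrow> pt \<Rightarrow> bool" where
  "on_tangent a b P X \<longleftrightarrow> fst X * fst P / a^2 + snd X * snd P / b^2 = 1"

definition tangent_meet :: "real \<Rightarrow> real \<Rightarrow> pt \<Rightarrow> pt \<Rightarrow> pt" where
  "tangent_meet a b P Q = (THE X. on_tangent a b P X \<and> on_tangent a b Q X)"

definition outer_area :: "real \<Rightarrow> real \<Rightarrow> pt \<Rightarrow> pt \<Rightarrow> pt \<Rightarrow> real" where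
  "outer_area a b P1 P2 P3 =
     tri_area (tangent_meet a b P1 P2) (tangent_meet a b P2 P3) (tangent_meet a b P3 P1)"

definition ell_delta :: "real \<Rightarrow> real \<Rightarrow> real" where
  "ell_delta a b = sqrt (a^4 - a^2 * b^2 + b^4)"

definition joach_J :: "real \<Rightarrow> real \<Rightarrow> real" where
  "joach_J a b = sqrt (2 * ell_delta a b - a^2 - b^2) / (a^2 - b^2)"

definition perim_L :: "real \<Rightarrow> real \<Rightarrow> real" where
  "perim_L a b = 2 * (ell_delta a b + a^2 + b^2) * joach_J a b"

end

theory Submission
  imports Defs
begin

text \<open>Write the vertices as P_i = (a x_i, b y_i) with u_i = (x_i, y_i) on the unit circle.
  For a chord PQ of the ellipse the quantity (1 - <P,Q>) / |PQ|, with <_,_> the polar form of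
  the ellipse, is symmetric in P and Q, and the reflection law at a vertex says that it takes
  the same value on the two incident sides; hence it is a single constant k for the whole
  triangle. Squaring turns this into the relations p x_i x_j + q y_i y_j = r for all i \<noteq> j,
  where p, q = 1 \<mp> k^2 (a^2 - b^2) and r = 1 - k^2 (a^2 + b^2): the points u_i are pairwise
  conjugate with respect to one conic. Three such points exist only if pq + r(p + q) = 0, which
  is the quadratic equation whose positive root is J^2; it also gives J L - 4 = -r.
  The stretch (x, y) \<mapsto> (a x, b y) maps tangents of the circle to tangents of the ellipse and
  multiplies all areas by ab, so A'/A is the area ratio of the tangential triangle of u_1 u_2 u_3
  to that triangle, whose square is 2 / \<Prod>(1 + u_i \<cdot> u_j). Intersecting the line conjugate to
  u_1 with the circle evaluates this product to r^2/2, whence A'/A = 2/(-r) = 2/(J L - 4).\<close>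

section \<open>The reflection law and the chord constant\<close>

lemma inner_eq_if_parallel_to_sum:
  fixes e f n :: pt
  assumes "fst e^2 + snd e^2 = 1" and "fst f^2 + snd f^2 = 1" and "cross2 e f \<noteq> 0"
    and "cross2 (fst e + fst f, snd e + snd f) n = 0"
  shows "fst n * fst e + snd n * snd e = fst n * fst f + snd n * snd f"
  using assms unfolding cross2_def prod.sel by algebra

lemma dist2_commute: "dist2 P Q = dist2 Q P"
  unfolding dist2_def by (simp add: power2_commute)

lemma dist2_pos: "P \<noteq> Q \<Longrightarrow> 0 < dist2 P Q"
  unfolding dist2_def by (simp add: prod_eq_iff sum_power2_gt_zero_iff)

lemma unit_dir_unit:
  assumes "P \<noteq> Q"
  shows "fst (unit_dir P Q)^2 + snd (unit_dir P Q)^2 = 1"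
proof -
  have "fst (unit_dir P Q)^2 + snd (unit_dir P Q)^2
      = ((fst Q - fst P)^2 + (snd Q - snd P)^2) / dist2 P Q ^ 2"
    unfolding unit_dir_def by (simp add: power_divide add_divide_distrib)
  also have "\<dots> = 1"
    using assms unfolding dist2_def by (simp add: power2_commute prod_eq_iff sum_power2_gt_zero_iff)
  finally show ?thesis .
qed

lemma cross2_unit_dir:
  "cross2 (unit_dir P U) (unit_dir P W)
     = cross2 (fst U - fst P, snd U - snd P) (fst W - fst P, snd W - snd P) / (dist2 P U * dist2 P W)"
  unfolding unit_dir_def cross2_def by (simp add: divide_inverse algebra_simps)

definition ell_inner :: "real \<Rightarrow> real \<Rightarrow> pt \<Rightarrow> pt \<Rightarrow> real" where
  "ell_inner a b P Q = fst P * fst Q / a^2 + snd P * snd Q / b^2"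

text \<open>Joachimsthal's quantity of the chord PQ (see ell_normal_inner_unit_dir), written so that
  its symmetry in P and Q is visible.\<close>
definition chord_const :: "real \<Rightarrow> real \<Rightarrow> pt \<Rightarrow> pt \<Rightarrow> real" where
  "chord_const a b P Q = (1 - ell_inner a b P Q) / dist2 P Q"

lemma chord_const_commute: "chord_const a b P Q = chord_const a b Q P"
  unfolding chord_const_def ell_inner_def by (simp add: dist2_commute mult.commute)

lemma ell_normal_inner_unit_dir:
  assumes "on_ellipse a b P"
  shows "fst (ell_normal a b P) * fst (unit_dir P Q) + snd (ell_normal a b P) * snd (unit_dir P Q)
           = - chord_const a b P Q"
proof -
  have "ell_inner a b P P = 1"
    using assms unfolding on_ellipse_def ell_inner_def by (simp add: power2_eq_square)
  moreover have "fst (ell_normal a b P) * fst (unit_dir P Q) + snd (ell_normal a b P) * snd (unit_dir P Q)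
      = (ell_inner a b P Q - ell_inner a b P P) / dist2 P Q"
    unfolding ell_normal_def unit_dir_def ell_inner_def by (simp add: divide_inverse algebra_simps)
  ultimately show ?thesis unfolding chord_const_def by (simp add: minus_divide_left)
qed

lemma chord_const_eq_if_bounce:
  assumes "on_ellipse a b P" and "bounce a b U P W"
    and "cross2 (fst U - fst P, snd U - snd P) (fst W - fst P, snd W - snd P) \<noteq> 0"
  shows "chord_const a b P U = chord_const a b P W"
proof -
  have "P \<noteq> U" "P \<noteq> W" using assms(3) by (auto simp: cross2_def)
  then have "cross2 (unit_dir P U) (unit_dir P W) \<noteq> 0"
    using assms(3) dist2_pos[of P U] dist2_pos[of P W] by (simp add: cross2_unit_dir)
  with \<open>P \<noteq> U\<close> \<open>P \<noteq> W\<close> assms(2)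
  have "fst (ell_normal a b P) * fst (unit_dir P U) + snd (ell_normal a b P) * snd (unit_dir P U)
      = fst (ell_normal a b P) * fst (unit_dir P W) + snd (ell_normal a b P) * snd (unit_dir P W)"
    by (intro inner_eq_if_parallel_to_sum unit_dir_unit) (simp_all add: bounce_def)
  then show ?thesis using ell_normal_inner_unit_dir[OF assms(1)] by simp
qed

lemma three_periodic_chord_const_eq:
  assumes "three_periodic a b P1 P2 P3"
  shows "chord_const a b P2 P3 = chord_const a b P1 P2"
    and "chord_const a b P3 P1 = chord_const a b P1 P2"
proof -
  let ?\<sigma> = "cross2 (fst P2 - fst P1, snd P2 - snd P1) (fst P3 - fst P1, snd P3 - snd P1)"
  have "cross2 (fst P1 - fst P2, snd P1 - snd P2) (fst P3 - fst P2, snd P3 - snd P2) = - ?\<sigma>"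
    and "cross2 (fst P3 - fst P1, snd P3 - snd P1) (fst P2 - fst P1, snd P2 - snd P1) = - ?\<sigma>"
    unfolding cross2_def by (simp_all add: algebra_simps)
  with assms have "chord_const a b P2 P1 = chord_const a b P2 P3"
    and "chord_const a b P1 P3 = chord_const a b P1 P2"
    unfolding three_periodic_def by (auto intro: chord_const_eq_if_bounce)
  then show "chord_const a b P2 P3 = chord_const a b P1 P2"
    and "chord_const a b P3 P1 = chord_const a b P1 P2"
    by (simp_all add: chord_const_commute)
qed

section \<open>Conjugate triangles inscribed in the unit circle\<close>

lemma sum_sq_diff_neq_zero: "(x, y) \<noteq> (x', y') \<Longrightarrow> (x - x')^2 + (y - y')^2 \<noteq> (0::real)"
  by (simp add: sum_power2_eq_zero_iff)

lemma unit_circle_inner_less_one: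
  fixes x y x' y' :: real
  assumes "x^2 + y^2 = 1" and "x'^2 + y'^2 = 1" and "(x, y) \<noteq> (x', y')"
  shows "x * x' + y * y' < 1"
proof -
  have "2 * (1 - (x * x' + y * y')) = (x - x')^2 + (y - y')^2"
    using assms(1,2) by algebra
  moreover have "0 < (x - x')^2 + (y - y')^2"
    using assms(3) by (auto simp: sum_power2_gt_zero_iff)
  ultimately show ?thesis by simp
qed

lemma unit_circle_cross_sq:
  fixes x y x' y' :: real
  assumes "x^2 + y^2 = 1" and "x'^2 + y'^2 = 1"
  shows "(x * y' - x' * y)^2 = (1 - (x * x' + y * y')) * (1 + (x * x' + y * y'))"
  using assms by algebra

lemma unit_circle_chord_inner:
  fixes u1 u2 v1 v2 n1 n2 r :: real
  assumes "u1^2 + u2^2 = 1" and "v1^2 + v2^2 = 1" and "(u1, u2) \<noteq> (v1, v2)"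
    and "n1 * u1 + n2 * u2 = r" and "n1 * v1 + n2 * v2 = r"
  shows "(n1^2 + n2^2) * (1 + (u1 * v1 + u2 * v2)) = 2 * r^2"
  using assms(1,2,4,5) sum_sq_diff_neq_zero[OF assms(3)] by algebra

lemma unit_circle_chord_product:
  fixes u1 u2 v1 v2 w1 w2 n1 n2 r :: real
  assumes "u1^2 + u2^2 = 1" and "v1^2 + v2^2 = 1" and "(u1, u2) \<noteq> (v1, v2)"
    and "n1 * u1 + n2 * u2 = r" and "n1 * v1 + n2 * v2 = r" and "w1^2 + w2^2 = 1"
  shows "(n1^2 + n2^2) * (1 + (w1 * u1 + w2 * u2)) * (1 + (w1 * v1 + w2 * v2))
           = (n1^2 + n2^2) + 2 * r * (w1 * n1 + w2 * n2) + r^2 - (w1 * n2 - w2 * n1)^2"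
  using assms(1,2,4-6) sum_sq_diff_neq_zero[OF assms(3)] by algebra

lemma conjugate_vertex_sq:
  fixes x1 y1 x2 y2 x3 y3 p q r :: real
  assumes "x1^2 + y1^2 = 1" and "x2^2 + y2^2 = 1" and "x3^2 + y3^2 = 1"
    and "p * x1 * x2 + q * y1 * y2 = r" and "p * x1 * x3 + q * y1 * y3 = r"
    and "p * x2 * x3 + q * y2 * y3 = r" and "(x2, y2) \<noteq> (x3, y3)"
  shows "(p - q) * (p * q + r * (p + q)) * x1^2 = (p + q) * r^2 - q^2 * (p + r)"
  using assms(1-6) sum_sq_diff_neq_zero[OF assms(7)] by algebra

lemma conjugate_triangle_closure:
  fixes x1 y1 x2 y2 x3 y3 p q r :: real
  assumes circle: "x1^2 + y1^2 = 1" "x2^2 + y2^2 = 1" "x3^2 + y3^2 = 1"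
    and conj: "p * x1 * x2 + q * y1 * y2 = r" "p * x1 * x3 + q * y1 * y3 = r"
      "p * x2 * x3 + q * y2 * y3 = r"
    and distinct: "(x1, y1) \<noteq> (x2, y2)" "(x2, y2) \<noteq> (x3, y3)" "(x1, y1) \<noteq> (x3, y3)"
    and "0 < q" and "p \<noteq> q"
  shows "p * q + r * (p + q) = 0"
proof (rule ccontr)
  assume "p * q + r * (p + q) \<noteq> 0"
  with \<open>p \<noteq> q\<close> have nz: "(p - q) * (p * q + r * (p + q)) \<noteq> 0" by simp
  have conj': "p * x2 * x1 + q * y2 * y1 = r" "p * x3 * x1 + q * y3 * y1 = r"
    "p * x3 * x2 + q * y3 * y2 = r"
    using conj by (simp_all add: mult_ac)
  have v: "(p - q) * (p * q + r * (p + q)) * x1^2 = (p + q) * r^2 - q^2 * (p + r)"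
    "(p - q) * (p * q + r * (p + q)) * x2^2 = (p + q) * r^2 - q^2 * (p + r)"
    "(p - q) * (p * q + r * (p + q)) * x3^2 = (p + q) * r^2 - q^2 * (p + r)"
    using conjugate_vertex_sq[OF circle conj distinct(2)]
      conjugate_vertex_sq[OF circle(2,1,3) conj'(1) conj(3,2) distinct(3)]
      conjugate_vertex_sq[OF circle(3,1,2) conj'(2,3) conj(1) distinct(1)] .
  have "x1^2 = x2^2" "x1^2 = x3^2"
    using v mult_left_cancel[OF nz, of "x1^2" "x2^2"] mult_left_cancel[OF nz, of "x1^2" "x3^2"] by argo+
  then have "y1^2 = y2^2" "y1^2 = y3^2" using circle by linarith+
  have sx: "x2 = x1 \<or> x2 = -x1" "x3 = x1 \<or> x3 = -x1"
    using \<open>x1^2 = x2^2\<close> \<open>x1^2 = x3^2\<close> by (auto simp: power2_eq_iff)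
  have sy: "y2 = y1 \<or> y2 = -y1" "y3 = y1 \<or> y3 = -y1"
    using \<open>y1^2 = y2^2\<close> \<open>y1^2 = y3^2\<close> by (auto simp: power2_eq_iff)
  txt \<open>So the vertices are three corners of the rectangle (\<plusminus>x1, \<plusminus>y1). Among them are a pair
    of mirror images in each axis and an antipodal pair; their three relations force r = 0 and
    q y1^2 = 0.\<close>
  have "x1 \<noteq> 0" "y1 \<noteq> 0" using sx sy distinct by auto
  then have "0 < q * (y1 * y1)"
    using \<open>0 < q\<close> by (metis mult_pos_pos not_real_square_gt_zero)
  then show False using sx sy conj distinct
    by (elim disjE) (simp_all add: algebra_simps, linarith?)
qed

lemma conjugate_triangle_product:
  fixes x1 y1 x2 y2 x3 y3 p q r :: real
  assumes circle: "x1^2 + y1^2 = 1" "x2^2 + y2^2 = 1" "x3^2 + y3^2 = 1"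
    and conj: "p * x1 * x2 + q * y1 * y2 = r" "p * x1 * x3 + q * y1 * y3 = r"
    and "(x2, y2) \<noteq> (x3, y3)"
    and closure: "p * q + r * (p + q) = 0" and "r \<noteq> 0"
  shows "(p + q)^2 * ((1 + (x1 * x2 + y1 * y2)) * (1 + (x1 * x3 + y1 * y3)) * (1 + (x2 * x3 + y2 * y3)))
           = 2 * r^2"
proof -
  define D where "D = (p * x1)^2 + (q * y1)^2"
  define R where "R = D + 2 * r * (x1 * (p * x1) + y1 * (q * y1)) + r^2 - (x1 * (q * y1) - y1 * (p * x1))^2"
  have inner: "D * (1 + (x2 * x3 + y2 * y3)) = 2 * r^2"
    unfolding D_def by (rule unit_circle_chord_inner[OF circle(2,3) assms(6) conj])
  have product: "D * (1 + (x1 * x2 + y1 * y2)) * (1 + (x1 * x3 + y1 * y3)) = R"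
    unfolding D_def R_def by (rule unit_circle_chord_product[OF circle(2,3) assms(6) conj circle(1)])
  have "(p + q)^2 * R = D^2"
    unfolding D_def R_def using circle(1) closure by algebra
  have "D \<noteq> 0" using inner \<open>r \<noteq> 0\<close> by auto
  have "D^2 * ((p + q)^2 * ((1 + (x1 * x2 + y1 * y2)) * (1 + (x1 * x3 + y1 * y3)) * (1 + (x2 * x3 + y2 * y3))))
      = (p + q)^2 * (D * (1 + (x1 * x2 + y1 * y2)) * (1 + (x1 * x3 + y1 * y3))) * (D * (1 + (x2 * x3 + y2 * y3)))"
    by (simp add: power2_eq_square mult_ac)
  also have "\<dots> = D^2 * (2 * r^2)"
    unfolding product inner \<open>(p + q)^2 * R = D^2\<close>[symmetric] by (simp add: mult_ac)
  finally show ?thesis using \<open>D \<noteq> 0\<close> by simp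
qed

section \<open>Stretching the unit circle onto the ellipse\<close>

lemma on_ellipse_stretch:
  assumes "a \<noteq> 0" and "b \<noteq> 0"
  shows "on_ellipse a b (a * x, b * y) \<longleftrightarrow> x^2 + y^2 = 1"
  using assms unfolding on_ellipse_def by (simp add: power_mult_distrib)

lemma chord_const_stretch:
  assumes "a \<noteq> 0" and "b \<noteq> 0"
  shows "chord_const a b (a * x, b * y) (a * x', b * y')
           = (1 - (x * x' + y * y')) / sqrt (a^2 * (x - x')^2 + b^2 * (y - y')^2)"
  using assms unfolding chord_const_def ell_inner_def dist2_def
  by (simp add: power2_eq_square algebra_simps)

lemma conjugate_if_chord_const:
  fixes a b k x y x' y' :: real
  assumes "a \<noteq> 0" and "b \<noteq> 0" and "x^2 + y^2 = 1" and "x'^2 + y'^2 = 1"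
    and "(x, y) \<noteq> (x', y')" and "chord_const a b (a * x, b * y) (a * x', b * y') = k"
  shows "(1 - k^2 * (a^2 - b^2)) * x * x' + (1 + k^2 * (a^2 - b^2)) * y * y' = 1 - k^2 * (a^2 + b^2)"
proof -
  define c where "c = x * x' + y * y'"
  define E where "E = a^2 * (x - x')^2 + b^2 * (y - y')^2"
  have "1 - c \<noteq> 0" using unit_circle_inner_less_one[OF assms(3-5)] unfolding c_def by simp
  have "0 < E" unfolding E_def
    using assms(1,2,5) by (auto intro: add_pos_nonneg add_nonneg_pos)
  have "k = (1 - c) / sqrt E"
    using assms(6)[symmetric] unfolding chord_const_stretch[OF assms(1,2)] c_def E_def .
  then have "k^2 = (1 - c)^2 / E" using \<open>0 < E\<close> by (simp add: power_divide)
  then have "(1 - c)^2 = k^2 * E" using \<open>0 < E\<close> by simp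
  moreover have "E = (1 - c) * ((a^2 + b^2) - (a^2 - b^2) * x * x' + (a^2 - b^2) * y * y')"
    unfolding E_def c_def using assms(3,4) by algebra
  ultimately have "(1 - c) * ((1 - c) - k^2 * ((a^2 + b^2) - (a^2 - b^2) * x * x' + (a^2 - b^2) * y * y')) = 0"
    by (simp add: algebra_simps power2_eq_square)
  with \<open>1 - c \<noteq> 0\<close>
  have "(1 - c) - k^2 * ((a^2 + b^2) - (a^2 - b^2) * x * x' + (a^2 - b^2) * y * y') = 0"
    by simp
  then show ?thesis unfolding c_def by (simp add: algebra_simps)
qed

lemma on_tangent_stretch:
  assumes "a \<noteq> 0" and "b \<noteq> 0"
  shows "on_tangent a b (a * x, b * y) X \<longleftrightarrow> fst X / a * x + snd X / b * y = 1"
  using assms unfolding on_tangent_def by (simp add: power2_eq_square)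

lemma tangent_meet_stretch:
  fixes a b x y x' y' :: real
  assumes "a \<noteq> 0" and "b \<noteq> 0" and "x * y' - x' * y \<noteq> 0"
  shows "tangent_meet a b (a * x, b * y) (a * x', b * y')
           = (a * ((y' - y) / (x * y' - x' * y)), b * ((x - x') / (x * y' - x' * y)))"
  unfolding tangent_meet_def
proof (rule the_equality)
  let ?u = "(y' - y) / (x * y' - x' * y)" and ?v = "(x - x') / (x * y' - x' * y)"
  have "?u * x + ?v * y = ((y' - y) * x + (x - x') * y) / (x * y' - x' * y)"
    and "?u * x' + ?v * y' = ((y' - y) * x' + (x - x') * y') / (x * y' - x' * y)"
    by (simp_all add: add_divide_distrib)
  then have "?u * x + ?v * y = 1" and "?u * x' + ?v * y' = 1"
    using assms(3) by (simp_all add: algebra_simps)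
  then show "on_tangent a b (a * x, b * y) (a * ?u, b * ?v) \<and> on_tangent a b (a * x', b * y') (a * ?u, b * ?v)"
    using assms(1,2) by (simp add: on_tangent_stretch)
next
  fix X
  assume "on_tangent a b (a * x, b * y) X \<and> on_tangent a b (a * x', b * y') X"
  then have "fst X / a * x + snd X / b * y = 1" and "fst X / a * x' + snd X / b * y' = 1"
    using assms(1,2) by (simp_all add: on_tangent_stretch)
  then have "fst X / a * (x * y' - x' * y) = y' - y" and "snd X / b * (x * y' - x' * y) = x - x'"
    by algebra+
  then show "X = (a * ((y' - y) / (x * y' - x' * y)), b * ((x - x') / (x * y' - x' * y)))"
    using assms by (simp add: prod_eq_iff field_simps)
qed

lemma tangent_meet_circle:
  assumes "x * y' - x' * y \<noteq> 0"
  shows "tangent_meet 1 1 (x, y) (x', y') = ((y' - y) / (x * y' - x' * y), (x - x') / (x * y' - x' * y))"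
  using tangent_meet_stretch[of 1 1 x y' x' y] assms by simp

lemma tri_area_stretch:
  "tri_area (a * x1, b * y1) (a * x2, b * y2) (a * x3, b * y3)
     = \<bar>a * b\<bar> * tri_area (x1, y1) (x2, y2) (x3, y3)"
proof -
  have "cross2 (a * x2 - a * x1, b * y2 - b * y1) (a * x3 - a * x1, b * y3 - b * y1)
      = a * b * cross2 (x2 - x1, y2 - y1) (x3 - x1, y3 - y1)"
    unfolding cross2_def by (simp add: algebra_simps)
  then show ?thesis unfolding tri_area_def by (simp add: abs_mult)
qed

lemma outer_area_stretch:
  assumes "a \<noteq> 0" and "b \<noteq> 0" and "x1 * y2 - x2 * y1 \<noteq> 0" and "x2 * y3 - x3 * y2 \<noteq> 0"
    and "x3 * y1 - x1 * y3 \<noteq> 0"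
  shows "outer_area a b (a * x1, b * y1) (a * x2, b * y2) (a * x3, b * y3)
           = \<bar>a * b\<bar> * outer_area 1 1 (x1, y1) (x2, y2) (x3, y3)"
  unfolding outer_area_def
  unfolding tangent_meet_stretch[OF assms(1,2,3)] tangent_meet_stretch[OF assms(1,2,4)]
    tangent_meet_stretch[OF assms(1,2,5)] tangent_meet_circle[OF assms(3)]
    tangent_meet_circle[OF assms(4)] tangent_meet_circle[OF assms(5)]
  by (rule tri_area_stretch)

section \<open>The tangential triangle of a triangle inscribed in the unit circle\<close>

lemma polar_triangle_area:
  fixes x1 y1 x2 y2 x3 y3 :: real
  assumes "x1 * y2 - x2 * y1 \<noteq> 0" and "x2 * y3 - x3 * y2 \<noteq> 0" and "x3 * y1 - x1 * y3 \<noteq> 0"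
  shows "outer_area 1 1 (x1, y1) (x2, y2) (x3, y3)
           = ((x2 - x1) * (y3 - y1) - (y2 - y1) * (x3 - x1))^2
             / (2 * \<bar>(x1 * y2 - x2 * y1) * (x2 * y3 - x3 * y2) * (x3 * y1 - x1 * y3)\<bar>)"
proof -
  define \<Delta>12 \<Delta>23 \<Delta>31 where "\<Delta>12 = x1 * y2 - x2 * y1" and "\<Delta>23 = x2 * y3 - x3 * y2"
    and "\<Delta>31 = x3 * y1 - x1 * y3"
  define \<Sigma> where "\<Sigma> = (x2 - x1) * (y3 - y1) - (y2 - y1) * (x3 - x1)"
  have "\<Delta>12 \<noteq> 0" "\<Delta>23 \<noteq> 0" "\<Delta>31 \<noteq> 0" using assms unfolding \<Delta>12_def \<Delta>23_def \<Delta>31_def .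
  define co where "co = ((y3 - y2) / \<Delta>23 - (y2 - y1) / \<Delta>12) * ((x3 - x1) / \<Delta>31 - (x1 - x2) / \<Delta>12)
     - ((x2 - x3) / \<Delta>23 - (x1 - x2) / \<Delta>12) * ((y1 - y3) / \<Delta>31 - (y2 - y1) / \<Delta>12)"
  have "outer_area 1 1 (x1, y1) (x2, y2) (x3, y3) = \<bar>co\<bar> / 2"
    unfolding outer_area_def tangent_meet_circle[OF assms(1)] tangent_meet_circle[OF assms(2)]
      tangent_meet_circle[OF assms(3)]
    unfolding tri_area_def cross2_def co_def \<Delta>12_def \<Delta>23_def \<Delta>31_def by simp
  moreover have "co * (\<Delta>12 * \<Delta>23 * \<Delta>31)
      = (((y3 - y2) * \<Delta>12 - (y2 - y1) * \<Delta>23) * ((x3 - x1) * \<Delta>12 - (x1 - x2) * \<Delta>31)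
        - ((x2 - x3) * \<Delta>12 - (x1 - x2) * \<Delta>23) * ((y1 - y3) * \<Delta>12 - (y2 - y1) * \<Delta>31)) / \<Delta>12"
    unfolding co_def using \<open>\<Delta>12 \<noteq> 0\<close> \<open>\<Delta>23 \<noteq> 0\<close> \<open>\<Delta>31 \<noteq> 0\<close> by (simp add: field_simps)
  moreover have "((y3 - y2) * \<Delta>12 - (y2 - y1) * \<Delta>23) * ((x3 - x1) * \<Delta>12 - (x1 - x2) * \<Delta>31)
        - ((x2 - x3) * \<Delta>12 - (x1 - x2) * \<Delta>23) * ((y1 - y3) * \<Delta>12 - (y2 - y1) * \<Delta>31) = \<Sigma>^2 * \<Delta>12"
    unfolding \<Delta>12_def \<Delta>23_def \<Delta>31_def \<Sigma>_def by (simp add: algebra_simps power2_eq_square)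
  ultimately have "co = \<Sigma>^2 / (\<Delta>12 * \<Delta>23 * \<Delta>31)"
    using \<open>\<Delta>12 \<noteq> 0\<close> \<open>\<Delta>23 \<noteq> 0\<close> \<open>\<Delta>31 \<noteq> 0\<close> by (simp add: eq_divide_eq)
  with \<open>outer_area 1 1 (x1, y1) (x2, y2) (x3, y3) = \<bar>co\<bar> / 2\<close> show ?thesis
    unfolding \<Sigma>_def \<Delta>12_def \<Delta>23_def \<Delta>31_def by (simp add: abs_mult)
qed

lemma circle_outer_area_ratio:
  fixes x1 y1 x2 y2 x3 y3 :: real
  assumes circle: "x1^2 + y1^2 = 1" "x2^2 + y2^2 = 1" "x3^2 + y3^2 = 1"
    and "x1 * y2 - x2 * y1 \<noteq> 0" and "x2 * y3 - x3 * y2 \<noteq> 0" and "x3 * y1 - x1 * y3 \<noteq> 0"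
  shows "(outer_area 1 1 (x1, y1) (x2, y2) (x3, y3) / tri_area (x1, y1) (x2, y2) (x3, y3))^2
           * ((1 + (x1 * x2 + y1 * y2)) * (1 + (x1 * x3 + y1 * y3)) * (1 + (x2 * x3 + y2 * y3))) = 2"
proof -
  define \<Sigma> where "\<Sigma> = (x2 - x1) * (y3 - y1) - (y2 - y1) * (x3 - x1)"
  define c12 c13 c23 where "c12 = x1 * x2 + y1 * y2" and "c13 = x1 * x3 + y1 * y3"
    and "c23 = x2 * x3 + y2 * y3"
  have \<Delta>_sq: "(x1 * y2 - x2 * y1)^2 = (1 - c12) * (1 + c12)"
    "(x2 * y3 - x3 * y2)^2 = (1 - c23) * (1 + c23)"
    "(x3 * y1 - x1 * y3)^2 = (1 - c13) * (1 + c13)"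
    using unit_circle_cross_sq[OF circle(1,2)] unit_circle_cross_sq[OF circle(2,3)]
      unit_circle_cross_sq[OF circle(3,1)] unfolding c12_def c13_def c23_def by (simp_all add: mult.commute)
  have \<Sigma>_sq: "\<Sigma>^2 = 2 * (1 - c12) * (1 - c13) * (1 - c23)"
    unfolding \<Sigma>_def c12_def c13_def c23_def using circle by algebra
  have nz: "1 - c12 \<noteq> 0" "1 + c12 \<noteq> 0" "1 - c13 \<noteq> 0" "1 + c13 \<noteq> 0" "1 - c23 \<noteq> 0" "1 + c23 \<noteq> 0"
    using \<Delta>_sq assms(4-6) by auto
  then have "\<Sigma> \<noteq> 0" using \<Sigma>_sq by auto
  define D where "D = (x1 * y2 - x2 * y1) * (x2 * y3 - x3 * y2) * (x3 * y1 - x1 * y3)"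
  have "D \<noteq> 0" unfolding D_def using assms(4-6) by simp
  have "tri_area (x1, y1) (x2, y2) (x3, y3) = \<bar>\<Sigma>\<bar> / 2"
    unfolding tri_area_def cross2_def \<Sigma>_def by simp
  moreover have "outer_area 1 1 (x1, y1) (x2, y2) (x3, y3) = \<bar>\<Sigma>\<bar> * \<bar>\<Sigma>\<bar> / (2 * \<bar>D\<bar>)"
    using polar_triangle_area[OF assms(4-6)] unfolding \<Sigma>_def D_def by (simp add: power2_eq_square)
  ultimately have "outer_area 1 1 (x1, y1) (x2, y2) (x3, y3) / tri_area (x1, y1) (x2, y2) (x3, y3)
      = (\<bar>\<Sigma>\<bar> * \<bar>\<Sigma>\<bar> / (2 * \<bar>D\<bar>)) / (\<bar>\<Sigma>\<bar> / 2)"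
    by (simp only:)
  also have "\<dots> = \<bar>\<Sigma>\<bar> / \<bar>D\<bar>"
    using \<open>\<Sigma> \<noteq> 0\<close> \<open>D \<noteq> 0\<close> by (simp add: field_simps)
  finally have "(outer_area 1 1 (x1, y1) (x2, y2) (x3, y3) / tri_area (x1, y1) (x2, y2) (x3, y3))^2
      = \<Sigma>^2 / ((1 - c12) * (1 + c12) * ((1 - c23) * (1 + c23)) * ((1 - c13) * (1 + c13)))"
    unfolding D_def by (simp add: power_divide power_mult_distrib \<Delta>_sq)
  also have "\<dots> = ((1 - c12) * (1 - c13) * (1 - c23)) * 2
      / (((1 - c12) * (1 - c13) * (1 - c23)) * ((1 + c12) * (1 + c13) * (1 + c23)))"
    unfolding \<Sigma>_sq by (simp only: mult_ac)
  also have "\<dots> = 2 / ((1 + c12) * (1 + c13) * (1 + c23))"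
    by (rule nonzero_mult_divide_mult_cancel_left) (use nz in simp)
  finally show ?thesis using nz unfolding c12_def c13_def c23_def by (simp add: divide_simps)
qed

section \<open>Joachimsthal's constant and the perimeter\<close>

lemma joach_J_perim_L_of_quadratic:
  fixes a b k :: real
  assumes "0 < b" and "b < a" and "0 < k"
    and root: "k^4 * (a^2 - b^2)^2 + 2 * k^2 * (a^2 + b^2) = 3"
  shows "joach_J a b = k" and "joach_J a b * perim_L a b - 4 = k^2 * (a^2 + b^2) - 1"
    and "1 < k^2 * (a^2 + b^2)"
proof -
  define K C S where "K = k^2" and "C = a^2 - b^2" and "S = a^2 + b^2"
  have "0 < K" "0 < C" "C < S"
    unfolding K_def C_def S_def using assms(1-3) by (simp_all add: power_strict_mono)
  have K_eq: "K^2 * C^2 + 2 * K * S - 3 = 0"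
    using root unfolding K_def C_def S_def by (simp add: power_mult_distrib[symmetric] power_mult[symmetric])
  then have "(K * C^2 + S)^2 = 2^2 * (a^4 - a^2 * b^2 + b^4)"
    unfolding C_def S_def by algebra
  moreover have "0 < K * C^2 + S" using \<open>0 < K\<close> \<open>0 < C\<close> \<open>C < S\<close> by (simp add: add_nonneg_pos)
  ultimately have \<delta>: "2 * ell_delta a b = K * C^2 + S"
    unfolding ell_delta_def by (metis real_sqrt_abs real_sqrt_mult abs_of_pos zero_less_numeral abs_numeral)
  then have "joach_J a b = sqrt (k^2 * C^2) / C"
    unfolding joach_J_def K_def C_def S_def by simp
  with \<open>0 < C\<close> \<open>0 < k\<close> show J: "joach_J a b = k" by (simp add: real_sqrt_mult)
  have "joach_J a b * perim_L a b = (2 * ell_delta a b + 2 * S) * K"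
    unfolding perim_L_def J K_def S_def by (simp add: power2_eq_square algebra_simps)
  also have "\<dots> = 3 + K * S"
    using K_eq unfolding \<delta> by (simp add: algebra_simps power2_eq_square)
  finally show "joach_J a b * perim_L a b - 4 = k^2 * (a^2 + b^2) - 1" unfolding K_def S_def by simp
  show "1 < k^2 * (a^2 + b^2)"
  proof (rule ccontr)
    assume "\<not> 1 < k^2 * (a^2 + b^2)"
    then have "K * S \<le> 1" unfolding K_def S_def by simp
    moreover have "0 < K * C" "K * C < K * S" using \<open>0 < K\<close> \<open>0 < C\<close> \<open>C < S\<close> by simp_all
    ultimately have "(K * C)^2 < 1"
      by (metis abs_of_pos abs_square_less_1 less_le_trans)
    then show False using K_eq \<open>K * S \<le> 1\<close> by (simp add: power_mult_distrib)
  qed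
qed

locale stretched_three_periodic =
  fixes a b x1 y1 x2 y2 x3 y3 :: real
  assumes b_pos: "0 < b" and b_less_a: "b < a"
    and periodic: "three_periodic a b (a * x1, b * y1) (a * x2, b * y2) (a * x3, b * y3)"
begin

lemma a_pos: "0 < a"
  using b_pos b_less_a by simp

lemma on_circle: "x1^2 + y1^2 = 1" "x2^2 + y2^2 = 1" "x3^2 + y3^2 = 1"
  using periodic a_pos b_pos by (simp_all add: three_periodic_def on_ellipse_stretch)

lemma vertices_distinct: "(x1, y1) \<noteq> (x2, y2)" "(x2, y2) \<noteq> (x3, y3)" "(x1, y1) \<noteq> (x3, y3)"
proof -
  have "cross2 (a * x2 - a * x1, b * y2 - b * y1) (a * x3 - a * x1, b * y3 - b * y1)
      = a * b * ((x2 - x1) * (y3 - y1) - (y2 - y1) * (x3 - x1))"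
    unfolding cross2_def by (simp add: algebra_simps)
  with periodic have "(x2 - x1) * (y3 - y1) - (y2 - y1) * (x3 - x1) \<noteq> 0"
    by (auto simp: three_periodic_def)
  then show "(x1, y1) \<noteq> (x2, y2)" "(x2, y2) \<noteq> (x3, y3)" "(x1, y1) \<noteq> (x3, y3)"
    by (auto simp: algebra_simps)
qed

definition k where "k = chord_const a b (a * x1, b * y1) (a * x2, b * y2)"

definition p where "p = 1 - k^2 * (a^2 - b^2)"
definition q where "q = 1 + k^2 * (a^2 - b^2)"
definition r where "r = 1 - k^2 * (a^2 + b^2)"

lemma k_pos: "0 < k"
proof -
  have "a \<noteq> 0" "b \<noteq> 0" using a_pos b_pos by simp_all
  moreover have "0 < a^2 * (x1 - x2)^2 + b^2 * (y1 - y2)^2"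
    using a_pos b_pos vertices_distinct(1) by (auto intro: add_pos_nonneg add_nonneg_pos)
  ultimately show ?thesis
    using unit_circle_inner_less_one[OF on_circle(1,2) vertices_distinct(1)]
    unfolding k_def by (simp add: chord_const_stretch)
qed

lemma conjugate: "p * x1 * x2 + q * y1 * y2 = r" "p * x1 * x3 + q * y1 * y3 = r"
  "p * x2 * x3 + q * y2 * y3 = r"
proof -
  have "a \<noteq> 0" "b \<noteq> 0" using a_pos b_pos by simp_all
  have "chord_const a b (a * x1, b * y1) (a * x3, b * y3) = k"
    and "chord_const a b (a * x2, b * y2) (a * x3, b * y3) = k"
    using three_periodic_chord_const_eq[OF periodic] chord_const_commute unfolding k_def by metis+
  note conj = conjugate_if_chord_const[OF \<open>a \<noteq> 0\<close> \<open>b \<noteq> 0\<close>]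
  from conj[OF on_circle(1,2) vertices_distinct(1) k_def[symmetric]]
    conj[OF on_circle(1,3) vertices_distinct(3) \<open>chord_const a b (a * x1, b * y1) (a * x3, b * y3) = k\<close>]
    conj[OF on_circle(2,3) vertices_distinct(2) \<open>chord_const a b (a * x2, b * y2) (a * x3, b * y3) = k\<close>]
  show "p * x1 * x2 + q * y1 * y2 = r" "p * x1 * x3 + q * y1 * y3 = r"
    "p * x2 * x3 + q * y2 * y3 = r"
    unfolding p_def q_def r_def by simp_all
qed

lemma closure_condition: "p * q + r * (p + q) = 0"
proof (rule conjugate_triangle_closure[OF on_circle conjugate vertices_distinct])
  have "0 < k^2 * (a^2 - b^2)" using k_pos b_pos b_less_a by (simp add: power_strict_mono)
  then show "0 < q" and "p \<noteq> q" unfolding p_def q_def by linarith+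
qed

lemma k_quadratic: "k^4 * (a^2 - b^2)^2 + 2 * k^2 * (a^2 + b^2) = 3"
  using closure_condition unfolding p_def q_def r_def by (simp add: algebra_simps power2_eq_square power4_eq_xxxx)

lemmas joach_J_perim_L = joach_J_perim_L_of_quadratic[OF b_pos b_less_a k_pos k_quadratic]

lemma cos_product:
  "2 * ((1 + (x1 * x2 + y1 * y2)) * (1 + (x1 * x3 + y1 * y3)) * (1 + (x2 * x3 + y2 * y3))) = r^2"
proof -
  have "r \<noteq> 0" using joach_J_perim_L(3) unfolding r_def by simp
  from conjugate_triangle_product[OF on_circle conjugate(1,2) vertices_distinct(2) closure_condition this]
  show ?thesis unfolding p_def q_def by simp
qed

lemma cross_neq_zero: "x1 * y2 - x2 * y1 \<noteq> 0" "x2 * y3 - x3 * y2 \<noteq> 0" "x3 * y1 - x1 * y3 \<noteq> 0"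
proof -
  have "r \<noteq> 0" using joach_J_perim_L(3) unfolding r_def by simp
  then have "1 + (x1 * x2 + y1 * y2) \<noteq> 0" "1 + (x2 * x3 + y2 * y3) \<noteq> 0" "1 + (x3 * x1 + y3 * y1) \<noteq> 0"
    using cos_product by (auto simp: mult.commute)
  moreover have "1 - (x1 * x2 + y1 * y2) \<noteq> 0" "1 - (x2 * x3 + y2 * y3) \<noteq> 0" "1 - (x3 * x1 + y3 * y1) \<noteq> 0"
    using unit_circle_inner_less_one[OF on_circle(1,2) vertices_distinct(1)]
      unit_circle_inner_less_one[OF on_circle(2,3) vertices_distinct(2)]
      unit_circle_inner_less_one[OF on_circle(3,1) vertices_distinct(3)[symmetric]] by simp_all
  ultimately show "x1 * y2 - x2 * y1 \<noteq> 0" "x2 * y3 - x3 * y2 \<noteq> 0" "x3 * y1 - x1 * y3 \<noteq> 0"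
    using unit_circle_cross_sq[OF on_circle(1,2)] unit_circle_cross_sq[OF on_circle(2,3)]
      unit_circle_cross_sq[OF on_circle(3,1)] by (metis mult_eq_0_iff zero_power2)+
qed

lemma area_ratio:
  "outer_area a b (a * x1, b * y1) (a * x2, b * y2) (a * x3, b * y3)
     / tri_area (a * x1, b * y1) (a * x2, b * y2) (a * x3, b * y3)
   = 2 / (joach_J a b * perim_L a b - 4)"
proof -
  define \<rho> where "\<rho> = outer_area 1 1 (x1, y1) (x2, y2) (x3, y3) / tri_area (x1, y1) (x2, y2) (x3, y3)"
  define \<Pi> where "\<Pi> = (1 + (x1 * x2 + y1 * y2)) * (1 + (x1 * x3 + y1 * y3)) * (1 + (x2 * x3 + y2 * y3))"
  have "a \<noteq> 0" "b \<noteq> 0" using a_pos b_pos by simp_all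
  then have stretched: "outer_area a b (a * x1, b * y1) (a * x2, b * y2) (a * x3, b * y3)
      / tri_area (a * x1, b * y1) (a * x2, b * y2) (a * x3, b * y3) = \<rho>"
    unfolding \<rho>_def outer_area_stretch[OF \<open>a \<noteq> 0\<close> \<open>b \<noteq> 0\<close> cross_neq_zero] tri_area_stretch by simp
  have "\<rho>^2 * \<Pi> = 2"
    unfolding \<rho>_def \<Pi>_def by (rule circle_outer_area_ratio[OF on_circle cross_neq_zero])
  have "(\<rho> * (- r))^2 = \<rho>^2 * r^2" by (simp add: power_mult_distrib)
  also have "\<dots> = 2 * (\<rho>^2 * \<Pi>)" using cos_product unfolding \<Pi>_def by simp
  also have "\<dots> = 2^2" using \<open>\<rho>^2 * \<Pi> = 2\<close> by simp
  finally have "(\<rho> * (- r))^2 = 2^2" .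
  moreover have "r < 0" using joach_J_perim_L(3) unfolding r_def by simp
  moreover have "0 \<le> \<rho>" unfolding \<rho>_def outer_area_def tri_area_def by simp
  ultimately have "\<rho> * (- r) = 2"
    by (metis mult_nonneg_nonneg neg_0_le_iff_le less_imp_le power2_eq_iff_nonneg zero_le_numeral)
  then have "\<rho> = 2 / (- r)"
    using \<open>r < 0\<close> by (subst nonzero_eq_divide_eq) auto
  moreover have "joach_J a b * perim_L a b - 4 = - r" using joach_J_perim_L(2) unfolding r_def by simp
  ultimately show ?thesis using stretched by simp
qed

end

theorem mainTheorem9:
  fixes a b :: real and P1 P2 P3 :: pt
  assumes "a > b" and "b > 0"
    and "three_periodic a b P1 P2 P3"
  shows "outer_area a b P1 P2 P3 / tri_area P1 P2 P3
           = 2 / (joach_J a b * perim_L a b - 4)"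
proof -
  have "a \<noteq> 0" and "b \<noteq> 0" using assms(1,2) by auto
  then have stretch: "P = (a * (fst P / a), b * (snd P / b))" for P :: pt by simp
  interpret stretched_three_periodic a b "fst P1 / a" "snd P1 / b" "fst P2 / a" "snd P2 / b"
    "fst P3 / a" "snd P3 / b"
    using assms stretch[of P1] stretch[of P2] stretch[of P3] by unfold_locales simp_all
  show ?thesis using area_ratio stretch[symmetric] by simp
qed

end
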